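(* Let $I=I(G)\subset S$ be an edge ideal with linear quotients with respect to the order $u_1,\dots,u_m$ of its minimal generators, and let $P=(x_{j_1},\dots,x_{j_t})$ with $j_1<\dots<j_t$. Consider the total order on the products $x_{j_1}u_1>\cdots>x_{j_t}u_1>x_{j_1}u_2>\cdots>x_{j_t}u_2>\cdots>x_{j_1}u_m>\cdots>x_{j_t}u_m$. Every $v\in\mathcal{G}(PI)$ equals at least one product $x_{j_p}u_q$; call the largest such product in this order the standard presentation of $v$, and order $\mathcal{G}(PI)$ by declaring $v>v'$ if the standard presentation of $v$ is larger than that of $v'$. Then $PI$ has linear quotients with respect to this order (listed from largest to smallest).
   Context: $S=K[x_1,\dots,x_n]$, $I(G)=(x_ix_j:\{x_i,x_j\}\in E(G))$; $\mathcal{G}(J)$ is the minimal monomial generating set of a monomial ideal $J$. $J$ has linear quotients with respect to an ordering $w_1,\dots,w_s$ of $\mathcal{G}(J)$ if for each $i\ge2$ the colon ideal $(w_1,\dots,w_{i-1}):(w_i)$ is generated by variables. *)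

theory Defs
  imports Main "HOL-Library.Multiset"
begin

text \<open>Monomials in the variables x_i (i :: nat) are modelled as multisets of
variable indices (exponent vectors); divisibility is multiset inclusion and
multiplication is multiset sum.  A monomial ideal is modelled by the set of
monomials it contains.\<close>

type_synonym monomial = "nat multiset"

definition mideal :: "monomial set \<Rightarrow> monomial set" where
  "mideal A = {m. \<exists>a\<in>A. a \<subseteq># m}"

definition mingens :: "monomial set \<Rightarrow> monomial set" where
  "mingens J = {m \<in> J. \<forall>m'\<in>J. m' \<subseteq># m \<longrightarrow> m' = m}"

definition mcolon :: "monomial set \<Rightarrow> monomial \<Rightarrow> monomial set" where
  "mcolon J w = {m. m + w \<in> J}"

definition gen_by_vars :: "monomial set \<Rightarrow> bool" where
  "gen_by_vars J \<longleftrightarrow> J = mideal {{#i#} | i. {#i#} \<in> J}"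

definition linear_quotients :: "monomial list \<Rightarrow> bool" where
  "linear_quotients ws \<longleftrightarrow>
     (\<forall>i. 1 \<le> i \<and> i < length ws \<longrightarrow>
        gen_by_vars (mcolon (mideal (set (take i ws))) (ws ! i)))"

definition edge_ideal :: "nat set set \<Rightarrow> monomial set" where
  "edge_ideal E = mideal (mset_set ` E)"

definition simple_graph :: "nat \<Rightarrow> nat set set \<Rightarrow> bool" where
  "simple_graph n E \<longleftrightarrow> (\<forall>e\<in>E. card e = 2 \<and> e \<subseteq> {1..n})"

text \<open>The list of products x_{j_1}u_1 > ... > x_{j_t}u_1 > ... > x_{j_t}u_m,
largest first.\<close>
definition products :: "nat list \<Rightarrow> monomial list \<Rightarrow> monomial list" where
  "products js us = concat (map (\<lambda>u. map (\<lambda>j. add_mset j u) js) us)"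

text \<open>Position of the standard presentation of v (largest product equal to v):
smaller position = larger in the order.\<close>
definition std_pos :: "nat list \<Rightarrow> monomial list \<Rightarrow> monomial \<Rightarrow> nat" where
  "std_pos js us v = (LEAST k. k < length (products js us) \<and> products js us ! k = v)"

end

theory Submission
  imports Defs
begin

text \<open>A minimal generator of \<open>PI\<close> is a product \<open>x_j u\<close> of a variable of \<open>P\<close> and an edge \<open>u\<close>,
and its standard presentation \<open>x_{j_p} u_q\<close> sits at position \<open>q |P| + p\<close> of the list of products.
Let \<open>s = x_{j_p'} u_q'\<close> precede \<open>w = x_{j_p} u_q\<close>; we need a variable \<open>x\<close> of \<open>s : w\<close> and a generator
preceding \<open>w\<close> that divides \<open>x w\<close>.  If \<open>q' = q\<close>, then \<open>s\<close> itself does, with \<open>x = x_{j_p'}\<close>.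
If \<open>q' < q\<close>, the linear quotients of \<open>I\<close> give a variable \<open>x_k\<close> of \<open>u_q' : u_q\<close> and an earlier edge
\<open>u_q''\<close> dividing \<open>x_k u_q\<close>.  Then \<open>x_{j_p} u_q''\<close> works if \<open>k \<noteq> j_p\<close>, \<open>x_{j_p'} u_q''\<close> works if
\<open>k = j_p\<close> and \<open>x_{j_p'}\<close> divides \<open>s : w\<close>, and otherwise \<open>s : w\<close> is a single variable because edges
are squarefree quadrics, so \<open>s\<close> works again.\<close>

lemma mset_subset_eq_size_imp_eq: "A \<subseteq># B \<Longrightarrow> size B \<le> size A \<Longrightarrow> A = B"
  using mset_subset_size subset_mset.le_imp_less_or_eq by fastforce

lemma mingens_mideal_same_size:
  assumes "\<And>a. a \<in> A \<Longrightarrow> size a = d"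
  shows "mingens (mideal A) = A"
proof (intro set_eqI iffI)
  fix m assume m: "m \<in> mingens (mideal A)"
  then obtain a where "a \<in> A" "a \<subseteq># m"
    unfolding mingens_def mideal_def by blast
  moreover from \<open>a \<in> A\<close> have "a \<in> mideal A"
    unfolding mideal_def by blast
  ultimately show "m \<in> A"
    using m unfolding mingens_def by blast
next
  fix a assume a: "a \<in> A"
  have "m' = a" if "m' \<in> mideal A" "m' \<subseteq># a" for m'
  proof -
    from that(1) obtain a' where "a' \<in> A" "a' \<subseteq># m'"
      unfolding mideal_def by blast
    from \<open>a' \<subseteq># m'\<close> that(2) have "a' \<subseteq># a"
      by (rule subset_mset.order_trans)
    with \<open>a' \<in> A\<close> a assms have "a' = a"
      by (metis order_refl mset_subset_eq_size_imp_eq)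
    with \<open>a' \<subseteq># m'\<close> that(2) show "m' = a"
      by (simp add: subset_mset.antisym)
  qed
  moreover from a have "a \<in> mideal A"
    unfolding mideal_def by blast
  ultimately show "a \<in> mingens (mideal A)"
    unfolding mingens_def by blast
qed

lemma mideal_add_mset_mideal:
  "mideal {{#j#} + u | j u. j \<in> P \<and> u \<in> mideal A} = mideal {add_mset j a | j a. j \<in> P \<and> a \<in> A}"
  unfolding mideal_def
proof (intro Collect_cong iffI)
  fix m assume "\<exists>g\<in>{{#j#} + u | j u. j \<in> P \<and> u \<in> {m. \<exists>a\<in>A. a \<subseteq># m}}. g \<subseteq># m"
  then obtain j u a where "j \<in> P" "a \<in> A" "a \<subseteq># u" "add_mset j u \<subseteq># m"
    by auto
  moreover from \<open>a \<subseteq># u\<close> have "add_mset j a \<subseteq># add_mset j u"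
    by simp
  ultimately show "\<exists>g\<in>{add_mset j a | j a. j \<in> P \<and> a \<in> A}. g \<subseteq># m"
    using subset_mset.order_trans by blast
next
  fix m assume "\<exists>g\<in>{add_mset j a | j a. j \<in> P \<and> a \<in> A}. g \<subseteq># m"
  then show "\<exists>g\<in>{{#j#} + u | j u. j \<in> P \<and> u \<in> {m. \<exists>a\<in>A. a \<subseteq># m}}. g \<subseteq># m"
    by fastforce
qed

lemma gen_by_vars_mcolonD:
  assumes "gen_by_vars (mcolon (mideal G) w)" "g \<in> G"
  shows "\<exists>x. x \<in># g - w \<and> (\<exists>g'\<in>G. g' \<subseteq># add_mset x w)"
proof -
  have "g \<subseteq># (g - w) + w"
    by (metis subset_eq_diff_conv subset_mset.order_refl)
  with assms(2) have "g - w \<in> mcolon (mideal G) w"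
    unfolding mcolon_def mideal_def by blast
  moreover from assms(1) have "mcolon (mideal G) w = mideal {{#i#} | i. {#i#} \<in> mcolon (mideal G) w}"
    unfolding gen_by_vars_def .
  ultimately have "g - w \<in> mideal {{#i#} | i. {#i#} \<in> mcolon (mideal G) w}"
    by (rule back_subst)
  then obtain x where "{#x#} \<in> mcolon (mideal G) w" "{#x#} \<subseteq># g - w"
    unfolding mideal_def by blast
  then show ?thesis
    by (auto simp: mcolon_def mideal_def)
qed

lemma gen_by_vars_mcolonI:
  assumes "\<And>g. g \<in> G \<Longrightarrow> \<exists>x. x \<in># g - w \<and> (\<exists>g'\<in>G. g' \<subseteq># add_mset x w)"
  shows "gen_by_vars (mcolon (mideal G) w)"
  unfolding gen_by_vars_def
proof (rule set_eqI, rule iffI)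
  fix m assume "m \<in> mcolon (mideal G) w"
  then obtain g where g: "g \<in> G" "g \<subseteq># m + w"
    unfolding mcolon_def mideal_def by blast
  then have "g - w \<subseteq># m"
    by (simp add: subset_eq_diff_conv)
  from assms[OF g(1)] obtain x g' where "x \<in># g - w" "g' \<in> G" "g' \<subseteq># add_mset x w"
    by blast
  then have "{#x#} \<in> mcolon (mideal G) w"
    unfolding mcolon_def mideal_def by auto
  moreover have "{#x#} \<subseteq># m"
    using \<open>x \<in># g - w\<close> \<open>g - w \<subseteq># m\<close> by (simp add: mset_subset_eqD)
  ultimately show "m \<in> mideal {{#i#} | i. {#i#} \<in> mcolon (mideal G) w}"
    unfolding mideal_def by blast
next
  fix m assume "m \<in> mideal {{#i#} | i. {#i#} \<in> mcolon (mideal G) w}"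
  then obtain x where x: "{#x#} \<in> mcolon (mideal G) w" "{#x#} \<subseteq># m"
    unfolding mideal_def by blast
  from x(1) obtain g where g: "g \<in> G" "g \<subseteq># {#x#} + w"
    unfolding mcolon_def mideal_def by blast
  have "{#x#} + w \<subseteq># m + w"
    using x(2) by simp
  with g(2) have "g \<subseteq># m + w"
    by (rule subset_mset.order_trans)
  with g(1) show "m \<in> mcolon (mideal G) w"
    unfolding mcolon_def mideal_def by blast
qed

lemma linear_quotientsD:
  assumes "linear_quotients us" "a < i" "i < length us"
  shows "\<exists>x. x \<in># us ! a - us ! i \<and> (\<exists>b<i. us ! b \<subseteq># add_mset x (us ! i))"
proof -
  have "gen_by_vars (mcolon (mideal (set (take i us))) (us ! i))"
    using assms unfolding linear_quotients_def by simp
  moreover have "us ! a \<in> set (take i us)"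
    using assms by (auto simp: in_set_conv_nth intro!: exI[of _ a])
  ultimately obtain x g where "x \<in># us ! a - us ! i" "g \<in> set (take i us)" "g \<subseteq># add_mset x (us ! i)"
    by (blast dest: gen_by_vars_mcolonD)
  moreover from \<open>g \<in> set (take i us)\<close> obtain b where "b < i" "g = us ! b"
    using assms(3) by (auto simp: in_set_conv_nth)
  ultimately show ?thesis by blast
qed

lemma set_take_sorted_rank:
  fixes r :: "'a \<Rightarrow> 'b::order"
  assumes "sorted_wrt (<) (map r ws)" "i < length ws"
  shows "set (take i ws) = {s \<in> set ws. r s < r (ws ! i)}"
proof -
  have less: "r (ws ! a) < r (ws ! b)" if "a < b" "b < length ws" for a b
    using sorted_wrt_nth_less[OF assms(1)] that by simp
  have less_iff: "r (ws ! a) < r (ws ! i) \<longleftrightarrow> a < i" if "a < length ws" for a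
    using less[of a i] less[of i a] assms(2) that by (cases a i rule: linorder_cases) (auto dest: order.asym)
  show ?thesis
  proof (intro set_eqI iffI)
    fix s assume "s \<in> set (take i ws)"
    then obtain a where "a < i" "s = ws ! a"
      using assms(2) by (auto simp: in_set_conv_nth)
    then show "s \<in> {s \<in> set ws. r s < r (ws ! i)}"
      using less_iff assms(2) by simp
  next
    fix s assume "s \<in> {s \<in> set ws. r s < r (ws ! i)}"
    then obtain a where "a < length ws" "s = ws ! a" "r s < r (ws ! i)"
      by (auto simp: in_set_conv_nth)
    then show "s \<in> set (take i ws)"
      using less_iff assms(2) by (auto simp: in_set_conv_nth intro!: exI[of _ a])
  qed
qed

lemma linear_quotients_rankI:
  fixes r :: "monomial \<Rightarrow> 'b::order"
  assumes sorted: "sorted_wrt (<) (map r ws)"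
    and exchange: "\<And>s w. s \<in> set ws \<Longrightarrow> w \<in> set ws \<Longrightarrow> r s < r w \<Longrightarrow>
           \<exists>x. x \<in># s - w \<and> (\<exists>s'\<in>set ws. r s' < r w \<and> s' \<subseteq># add_mset x w)"
  shows "linear_quotients ws"
  unfolding linear_quotients_def
proof (intro allI impI)
  fix i assume "1 \<le> i \<and> i < length ws"
  then have i: "i < length ws" by simp
  show "gen_by_vars (mcolon (mideal (set (take i ws))) (ws ! i))"
    unfolding set_take_sorted_rank[OF sorted i]
    using exchange[OF _ nth_mem[OF i]] by (intro gen_by_vars_mcolonI) blast
qed

lemma size_mset_set_edge:
  assumes "simple_graph n E" "e \<in> E"
  shows "size (mset_set e) = 2"
  using assms by (simp add: simple_graph_def size_mset_set)

lemma mingens_edge_ideal: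
  assumes "simple_graph n E"
  shows "mingens (edge_ideal E) = mset_set ` E"
  unfolding edge_ideal_def
  by (rule mingens_mideal_same_size) (use size_mset_set_edge[OF assms] in blast)

lemma mingens_variables_times_edge_ideal:
  assumes "simple_graph n E"
  shows "mingens (mideal {{#j#} + u | j u. j \<in> P \<and> u \<in> edge_ideal E}) =
           {add_mset j u | j u. j \<in> P \<and> u \<in> mset_set ` E}"
  unfolding edge_ideal_def mideal_add_mset_mideal
  by (rule mingens_mideal_same_size) (use size_mset_set_edge[OF assms] in auto)

lemma edge_monomial:
  assumes "simple_graph n E" "e \<in> E"
  obtains a b where "a \<noteq> b" "mset_set e = {#a, b#}"
proof -
  from assms obtain a b where "a \<noteq> b" "e = {a, b}"
    unfolding simple_graph_def by (meson card_2_iff)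
  with that show thesis
    by simp
qed

lemma length_products: "length (products js us) = length us * length js"
  by (induction us) (auto simp: products_def)

lemma set_products: "set (products js us) = {add_mset j u | j u. j \<in> set js \<and> u \<in> set us}"
  by (auto simp: products_def)

lemma nth_products:
  assumes "q < length us" "p < length js"
  shows "products js us ! (q * length js + p) = add_mset (js ! p) (us ! q)"
  using assms
proof (induction us arbitrary: q)
  case Nil
  then show ?case by simp
next
  case (Cons u us)
  then show ?case
    by (cases q) (auto simp: products_def nth_append)
qed

lemma mult_add_less_imp_le:
  fixes t :: nat
  assumes "q' * t + p' < q * t + p" "p < t"
  shows "q' \<le> q"
proof (rule ccontr)
  assume "\<not> q' \<le> q"
  then have "Suc q * t \<le> q' * t"
    by (intro mult_le_mono1) simp
  with assms show False
    by simp
qed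

lemma std_pos_products_le:
  assumes "q < length us" "p < length js"
  shows "std_pos js us (add_mset (js ! p) (us ! q)) \<le> q * length js + p"
proof -
  have "q * length js + p < Suc q * length js"
    using assms(2) by simp
  also have "\<dots> \<le> length us * length js"
    using assms(1) by (intro mult_le_mono1) simp
  finally have "q * length js + p < length us * length js" .
  then show ?thesis
    unfolding std_pos_def using nth_products[OF assms] by (intro Least_le) (simp add: length_products)
qed

lemma std_pos_products_less:
  assumes "q' < q" "q \<le> length us" "p < length js"
  shows "std_pos js us (add_mset (js ! p) (us ! q')) < q * length js"
proof -
  have "std_pos js us (add_mset (js ! p) (us ! q')) \<le> q' * length js + p"
    using assms by (intro std_pos_products_le) simp_all
  also have "\<dots> < Suc q' * length js"
    using assms(3) by simp
  also have "\<dots> \<le> q * length js"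
    using assms(1) by (intro mult_le_mono1) simp
  finally show ?thesis .
qed

lemma std_pos_products:
  assumes "v \<in> set (products js us)"
  obtains q p where "q < length us" "p < length js"
    "std_pos js us v = q * length js + p" "v = add_mset (js ! p) (us ! q)"
proof -
  let ?k = "std_pos js us v"
  have k: "?k < length us * length js" "products js us ! ?k = v"
    using LeastI_ex[of "\<lambda>k. k < length (products js us) \<and> products js us ! k = v"] assms
    unfolding std_pos_def by (auto simp: in_set_conv_nth length_products)
  then have "0 < length js"
    by (cases "length js") auto
  then have "?k div length js < length us" "?k mod length js < length js"
    using k(1) by (simp_all add: less_mult_imp_div_less)
  moreover have "?k = ?k div length js * length js + ?k mod length js"
    by simp
  ultimately show thesis
    using that k(2) nth_products by metis
qed

lemma in_diff_if_subset_eq_add_mset: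
  assumes "s \<subseteq># add_mset x w" "size s = size w" "s \<noteq> w"
  shows "x \<in># s - w"
proof (rule ccontr)
  assume "x \<notin># s - w"
  then have "count s x \<le> count w x"
    by (simp add: in_diff_count not_less)
  moreover have "count s y \<le> count w y" if "y \<noteq> x" for y
    using mset_subset_eq_count[OF assms(1), of y] that by simp
  ultimately have "s \<subseteq># w"
    unfolding subseteq_mset_def by metis
  with assms(2,3) show False
    by (metis order_refl mset_subset_eq_size_imp_eq)
qed

lemma degree_three_exchange:
  assumes "a \<noteq> b" "k \<in># {#a, b#} - u" "size u = 2"
    and "add_mset j {#a, b#} \<noteq> add_mset k u" "j \<notin># add_mset j {#a, b#} - add_mset k u"
  shows "\<exists>x. x \<in># add_mset j {#a, b#} - add_mset k u \<and> add_mset j {#a, b#} \<subseteq># add_mset x (add_mset k u)"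
proof -
  have "count u k < count {#a, b#} k"
    using assms(2) by (simp add: in_diff_count)
  moreover have "count {#a, b#} k \<le> 1"
    using assms(1) by auto
  ultimately have "k \<notin># u"
    by (simp add: not_in_iff)
  from \<open>count u k < count {#a, b#} k\<close> have "k = a \<or> k = b"
    by (auto split: if_splits)
  then obtain e where e: "{#a, b#} = {#k, e#}" "e \<noteq> k"
    using assms(1) by (metis add_mset_commute)
  have j_le: "count (add_mset j {#a, b#}) j \<le> count (add_mset k u) j"
    using assms(5) by (simp only: in_diff_count not_less)
  then have "j \<noteq> k"
    using \<open>count u k < count {#a, b#} k\<close> by auto
  with j_le have "j \<in># u"
    by (intro count_inI) (simp split: if_splits)
  have "add_mset j {#a, b#} = {#e, k#} + {#j#}"
    unfolding e(1) by (simp add: add_mset_commute)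
  also have "\<dots> \<subseteq># {#e, k#} + u"
    using \<open>j \<in># u\<close> by (intro subset_mset.add_left_mono) simp
  also have "\<dots> = add_mset e (add_mset k u)"
    by simp
  finally have "add_mset j {#a, b#} \<subseteq># add_mset e (add_mset k u)" .
  moreover from this have "e \<in># add_mset j {#a, b#} - add_mset k u"
    using assms(3,4) by (intro in_diff_if_subset_eq_add_mset) simp_all
  ultimately show ?thesis
    by blast
qed

lemma exchange_through_earlier_edge:
  assumes "a \<noteq> b" "size u = 2" "k \<in># {#a, b#} - u" "v \<subseteq># add_mset k u"
    and "add_mset j' {#a, b#} \<noteq> add_mset j u"
  shows "\<exists>x. x \<in># add_mset j' {#a, b#} - add_mset j u \<and>
           (\<exists>s'\<in>{add_mset j v, add_mset j' v, add_mset j' {#a, b#}}. s' \<subseteq># add_mset x (add_mset j u))"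
proof (cases "k = j")
  case False
  from assms(3) have "count u k < count {#a, b#} k"
    by (simp add: in_diff_count)
  with False have "k \<in># add_mset j' {#a, b#} - add_mset j u"
    by (simp add: in_diff_count)
  moreover from assms(4) have "add_mset j v \<subseteq># add_mset k (add_mset j u)"
    by (simp add: add_mset_commute)
  ultimately show ?thesis
    by blast
next
  case True
  show ?thesis
  proof (cases "j' \<in># add_mset j' {#a, b#} - add_mset j u")
    case True
    moreover from assms(4) \<open>k = j\<close> have "add_mset j' v \<subseteq># add_mset j' (add_mset j u)"
      by simp
    ultimately show ?thesis
      by blast
  next
    case False
    with assms \<open>k = j\<close> show ?thesis
      using degree_three_exchange[of a b j u j'] by blast
  qed
qed

lemma products_exchange:
  assumes "distinct js" "linear_quotients us"
    and quadrics: "\<And>u. u \<in> set us \<Longrightarrow> \<exists>a b. a \<noteq> b \<and> u = {#a, b#}"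
    and s_in: "s \<in> set (products js us)" and w_in: "w \<in> set (products js us)"
    and less: "std_pos js us s < std_pos js us w"
  shows "\<exists>x. x \<in># s - w \<and>
           (\<exists>s'\<in>set (products js us). std_pos js us s' < std_pos js us w \<and> s' \<subseteq># add_mset x w)"
proof -
  let ?pos = "std_pos js us" and ?t = "length js"
  obtain q' p' where s: "q' < length us" "p' < ?t" "?pos s = q' * ?t + p'"
    "s = add_mset (js ! p') (us ! q')"
    using s_in by (rule std_pos_products)
  obtain q p where w: "q < length us" "p < ?t" "?pos w = q * ?t + p"
    "w = add_mset (js ! p) (us ! q)"
    using w_in by (rule std_pos_products)
  from less s(3) w(2,3) have "q' \<le> q"
    by (intro mult_add_less_imp_le[of q' ?t p' q p]) simp_all
  then consider (same_edge) "q' = q" | (earlier_edge) "q' < q"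
    by linarith
  then show ?thesis
  proof cases
    case same_edge
    with less s w have "p' < p"
      by simp
    with assms(1) w(2) have "js ! p' \<noteq> js ! p"
      by (simp add: nth_eq_iff_index_eq)
    with s(4) w(4) same_edge have "js ! p' \<in># s - w" "s \<subseteq># add_mset (js ! p') w"
      by (simp_all add: in_diff_count)
    with s_in less show ?thesis
      by blast
  next
    case earlier_edge
    obtain k q'' where k: "k \<in># us ! q' - us ! q" and "q'' < q"
      and v: "us ! q'' \<subseteq># add_mset k (us ! q)"
      using linear_quotientsD[OF assms(2) earlier_edge w(1)] by blast
    have earlier: "add_mset (js ! i) (us ! q'') \<in> set (products js us) \<and>
        ?pos (add_mset (js ! i) (us ! q'')) < ?pos w" if "i < ?t" for i
      using that \<open>q'' < q\<close> w(1,3) std_pos_products_less[of q'' q us i js]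
      unfolding set_products by force
    obtain a b where ab: "a \<noteq> b" "us ! q' = {#a, b#}"
      using quadrics[OF nth_mem[OF s(1)]] by blast
    have "size (us ! q) = 2"
      using quadrics[OF nth_mem[OF w(1)]] by auto
    have s_ab: "s = add_mset (js ! p') {#a, b#}"
      using s(4) ab(2) by simp
    with less w(4) have "add_mset (js ! p') {#a, b#} \<noteq> add_mset (js ! p) (us ! q)"
      by auto
    from exchange_through_earlier_edge[OF ab(1) \<open>size (us ! q) = 2\<close> k[unfolded ab(2)] v this]
    obtain x s' where "x \<in># s - w" "s' \<subseteq># add_mset x w"
      and "s' \<in> {add_mset (js ! p) (us ! q''), add_mset (js ! p') (us ! q''), s}"
      unfolding s_ab w(4) by blast
    with earlier[OF w(2)] earlier[OF s(2)] s_in less show ?thesis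
      by blast
  qed
qed

theorem mainTheorem11:
  fixes n :: nat and E :: "nat set set" and us :: "monomial list"
    and Pvars :: "nat set" and ws :: "monomial list"
  assumes "simple_graph n E"
    and "distinct us" and "set us = mingens (edge_ideal E)"
    and "linear_quotients us"
    and "Pvars \<subseteq> {1..n}"
    and "distinct ws"
    and "set ws = mingens (mideal {{#j#} + u | j u. j \<in> Pvars \<and> u \<in> edge_ideal E})"
    and "sorted_wrt (<) (map (std_pos (sorted_list_of_set Pvars) us) ws)"
  shows "linear_quotients ws"
proof -
  let ?js = "sorted_list_of_set Pvars"
  from assms(5) have "finite Pvars"
    by (rule finite_subset) simp
  then have js: "set ?js = Pvars" "distinct ?js"
    by simp_all
  have us_edges: "set us = mset_set ` E"
    using assms(3) mingens_edge_ideal[OF assms(1)] by simp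
  have ws_products: "set ws = set (products ?js us)"
    using assms(7) mingens_variables_times_edge_ideal[OF assms(1)] us_edges js(1)
    by (simp add: set_products)
  have quadrics: "\<exists>a b. a \<noteq> b \<and> u = {#a, b#}" if "u \<in> set us" for u
  proof -
    from that us_edges obtain e where "e \<in> E" "u = mset_set e"
      by blast
    then show ?thesis
      using edge_monomial[OF assms(1)] by metis
  qed
  show ?thesis
  proof (rule linear_quotients_rankI[OF assms(8)])
    fix s w assume "s \<in> set ws" "w \<in> set ws" "std_pos ?js us s < std_pos ?js us w"
    then show "\<exists>x. x \<in># s - w \<and>
        (\<exists>s'\<in>set ws. std_pos ?js us s' < std_pos ?js us w \<and> s' \<subseteq># add_mset x w)"
      unfolding ws_products using products_exchange[OF js(2) assms(4) quadrics] by blast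
  qed
qed

end
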